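(* For a greedy policy, for every $n\ge1$ and every real $0\le x\le n$, $$\Gamma_{\mathbf R}[\lceil x\rceil]<\Gamma_{\mathbf S}[n-\lceil x\rceil]-\gamma\ \Longrightarrow\ R_{\mathbf G}(n)>x\ \Longrightarrow\ \Gamma_{\mathbf R}[\lfloor x\rfloor]\le\Gamma_{\mathbf S}[n-\lfloor x\rfloor]+\gamma.$$
   Context: Let $(r_i)_{i\ge1}$, $(s_i)_{i\ge1}$ be probability vectors on the positive integers with $\mu:=\sum_i r_is_i>0$, and $\gamma:=\sup_i r_i\vee\sup_i s_i$. Let $\{L_{\mathbf R}(n)\}_{n\ge1}$, $\{L_{\mathbf S}(n)\}_{n\ge1}$ be independent i.i.d. sequences with $\Pr(L_{\mathbf R}(1)=i)=r_i$, $\Pr(L_{\mathbf S}(1)=i)=s_i$. Put $X_{\mathbf R}(n)=s_{L_{\mathbf R}(n)}$, $X_{\mathbf S}(n)=r_{L_{\mathbf S}(n)}$, and $\Gamma_{\mathbf R}[m]=\sum_{j=1}^mX_{\mathbf R}(j)$, $\Gamma_{\mathbf S}[m]=\sum_{j=1}^mX_{\mathbf S}(j)$ (with $\Gamma[0]=0$). A reading policy is a $\{0,1\}$-valued process $C(n)$ ($C(n)=1$ iff the $n$-th record is read from $\mathbf R$), $R(n)=\sum_{j\le n}C(j)$, $S(n)=n-R(n)$, with $C(n)$ being $\mathcal F_{n-1}$-measurable where $\mathcal F_n=\mathcal F_0\vee\sigma(L_{\mathbf R}(1),\dots,L_{\mathbf R}(R(n));L_{\mathbf S}(1),\dots,L_{\mathbf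 S}(S(n)))$ and $\mathcal F_0$ (randomization) is independent of the labels. A greedy policy satisfies, for $n\ge1$, $C(n+1)=1$ if $\Gamma_{\mathbf S}[S(n)]>\Gamma_{\mathbf R}[R(n)]$ and $C(n+1)=0$ if $\Gamma_{\mathbf S}[S(n)]<\Gamma_{\mathbf R}[R(n)]$ (ties arbitrary); $R_{\mathbf G}(n)$ is its $R(n)$. *)

theory Defs
  imports Complex_Main
begin

text \<open>Probability vector on the positive integers (index 0 is unused).\<close>
definition prob_vec :: "(nat \<Rightarrow> real) \<Rightarrow> bool" where
  "prob_vec r \<longleftrightarrow> (\<forall>i\<ge>1. 0 \<le> r i) \<and> (\<lambda>i. r (Suc i)) sums 1"

definition gam :: "(nat \<Rightarrow> real) \<Rightarrow> (nat \<Rightarrow> real) \<Rightarrow> real" where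
  "gam r s = max (SUP i\<in>{1..}. r i) (SUP i\<in>{1..}. s i)"

definition GammaR :: "(nat \<Rightarrow> real) \<Rightarrow> (nat \<Rightarrow> nat) \<Rightarrow> nat \<Rightarrow> real" where
  "GammaR s LR m = (\<Sum>j=1..m. s (LR j))"

definition GammaS :: "(nat \<Rightarrow> real) \<Rightarrow> (nat \<Rightarrow> nat) \<Rightarrow> nat \<Rightarrow> real" where
  "GammaS r LS m = (\<Sum>j=1..m. r (LS j))"

text \<open>R(n) = number of j in 1..n with C(j) = 1 (C j = True means read from R).\<close>
definition Rcnt :: "(nat \<Rightarrow> bool) \<Rightarrow> nat \<Rightarrow> nat" where
  "Rcnt C n = card {j\<in>{1..n}. C j}"

definition greedy ::
  "(nat \<Rightarrow> real) \<Rightarrow> (nat \<Rightarrow> real) \<Rightarrow> (nat \<Rightarrow> nat) \<Rightarrow> (nat \<Rightarrow> nat) \<Rightarrow> (nat \<Rightarrow> bool) \<Rightarrow> bool" where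
  "greedy r s LR LS C \<longleftrightarrow>
     (\<forall>n\<ge>1. (GammaS r LS (n - Rcnt C n) > GammaR s LR (Rcnt C n) \<longrightarrow> C (Suc n)) \<and>
            (GammaS r LS (n - Rcnt C n) < GammaR s LR (Rcnt C n) \<longrightarrow> \<not> C (Suc n)))"

end

theory Submission
  imports Defs
begin

text \<open>
  The greedy rule keeps the two partial-sum processes balanced: after \<open>n\<close> reads, with
  \<open>R = R(n)\<close> and \<open>S = n - R\<close>, every shorter prefix of one stream has sum at most the full
  prefix sum of the other, i.e. \<open>\<Gamma>\<^sub>S[a] \<le> \<Gamma>\<^sub>R[R]\<close> for \<open>a < S\<close> and \<open>\<Gamma>\<^sub>R[a] \<le> \<Gamma>\<^sub>S[S]\<close>
  for \<open>a < R\<close>; indeed a stream is only advanced when its sum is not ahead.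
  Both statements follow by monotonicity of the partial sums: if \<open>R \<le> \<lceil>x\<rceil>\<close>, then
  \<open>\<Gamma>\<^sub>S[n - \<lceil>x\<rceil>]\<close> exceeds a prefix dominated by \<open>\<Gamma>\<^sub>R[\<lceil>x\<rceil>]\<close> by one increment \<open>\<le> \<gamma>\<close>;
  if \<open>\<lfloor>x\<rfloor> < R\<close>, then \<open>\<Gamma>\<^sub>R[\<lfloor>x\<rfloor>] \<le> \<Gamma>\<^sub>S[n - R] \<le> \<Gamma>\<^sub>S[n - \<lfloor>x\<rfloor>]\<close>.
  The argument is pathwise.
\<close>

lemma Rcnt_Suc: "Rcnt C (Suc n) = Rcnt C n + (if C (Suc n) then 1 else 0)"
proof -
  have "{j\<in>{1..Suc n}. C j} = {j\<in>{1..n}. C j} \<union> (if C (Suc n) then {Suc n} else {})"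
    by (auto simp: le_Suc_eq)
  then show ?thesis unfolding Rcnt_def by (simp add: card_insert_if)
qed

lemma Rcnt_le: "Rcnt C n \<le> n"
proof -
  have "Rcnt C n \<le> card {1..n}" unfolding Rcnt_def by (rule card_mono) auto
  then show ?thesis by simp
qed

lemma mono_partial_sum:
  fixes f :: "nat \<Rightarrow> 'a::ordered_comm_monoid_add"
  assumes "\<And>j. j \<ge> 1 \<Longrightarrow> 0 \<le> f j"
  shows "mono (\<lambda>m. \<Sum>j=1..m. f j)"
  by (rule monoI, rule sum_mono2) (use assms in auto)

lemma prob_vec_nonneg: "prob_vec r \<Longrightarrow> i \<ge> 1 \<Longrightarrow> 0 \<le> r i"
  by (simp add: prob_vec_def)

lemma prob_vec_le_one:
  assumes "prob_vec r" "i \<ge> 1"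
  shows "r i \<le> 1"
proof -
  obtain k where k: "i = Suc k" using assms(2) by (cases i) auto
  have "summable (\<lambda>i. r (Suc i))" "(\<Sum>i. r (Suc i)) = 1"
    using assms(1) by (auto simp: prob_vec_def sums_iff)
  moreover have "(\<Sum>i\<in>{k}. r (Suc i)) \<le> (\<Sum>i. r (Suc i))"
    using assms(1) \<open>summable _\<close> by (intro sum_le_suminf) (auto simp: prob_vec_def)
  ultimately show ?thesis using k by simp
qed

lemma le_SUP_prob_vec:
  assumes "prob_vec r" "i \<ge> 1"
  shows "r i \<le> (SUP i\<in>{1..}. r i)"
proof (rule cSUP_upper)
  show "bdd_above (r ` {1..})"
    using prob_vec_le_one[OF assms(1)] by (intro bdd_aboveI[where M = 1]) auto
qed (use assms(2) in simp)

lemma le_gam: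
  assumes "prob_vec r" "prob_vec s" "i \<ge> 1"
  shows "r i \<le> gam r s" "s i \<le> gam r s"
  using le_SUP_prob_vec[OF assms(1,3)] le_SUP_prob_vec[OF assms(2,3)]
  by (auto simp: gam_def)

text \<open>
  \<open>A\<close> and \<open>B\<close> play the roles of \<open>\<Gamma>\<^sub>R\<close> and \<open>\<Gamma>\<^sub>S\<close>; as for \<open>greedy\<close>, the first read is unconstrained.
\<close>
locale greedy_reading =
  fixes A B :: "nat \<Rightarrow> real" and C :: "nat \<Rightarrow> bool"
  assumes mono_A: "mono A" and mono_B: "mono B" and A_0_eq_B_0: "A 0 = B 0"
    and greedy_rule: "\<forall>n\<ge>1. (B (n - Rcnt C n) > A (Rcnt C n) \<longrightarrow> C (Suc n)) \<and>
                              (B (n - Rcnt C n) < A (Rcnt C n) \<longrightarrow> \<not> C (Suc n))"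
begin

lemma read_first_imp: "C (Suc n) \<Longrightarrow> A (Rcnt C n) \<le> B (n - Rcnt C n)"
  using greedy_rule[rule_format, of n] A_0_eq_B_0 by (cases "n = 0") (auto simp: Rcnt_def)

lemma read_second_imp: "\<not> C (Suc n) \<Longrightarrow> B (n - Rcnt C n) \<le> A (Rcnt C n)"
  using greedy_rule[rule_format, of n] A_0_eq_B_0 by (cases "n = 0") (auto simp: Rcnt_def)

lemma balanced:
  "(\<forall>a < n - Rcnt C n. B a \<le> A (Rcnt C n)) \<and> (\<forall>a < Rcnt C n. A a \<le> B (n - Rcnt C n))"
proof (induction n)
  case 0
  show ?case by (simp add: Rcnt_def)
next
  case (Suc n)
  define R where "R = Rcnt C n"
  have "R \<le> n" unfolding R_def by (rule Rcnt_le)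
  show ?case
  proof (cases "C (Suc n)")
    case True
    have R': "Rcnt C (Suc n) = Suc R" and S': "Suc n - Rcnt C (Suc n) = n - R"
      using True by (simp_all add: Rcnt_Suc R_def)
    have "A R \<le> B (n - R)" using read_first_imp[OF True] by (simp add: R_def)
    moreover have "A R \<le> A (Suc R)" using mono_A by (simp add: monoD)
    ultimately show ?thesis using Suc.IH unfolding S' R' R_def[symmetric]
      by (auto simp: less_Suc_eq intro: order_trans)
  next
    case False
    have R': "Rcnt C (Suc n) = R" and S': "Suc n - R = Suc (n - R)"
      using False \<open>R \<le> n\<close> by (simp_all add: Rcnt_Suc R_def Suc_diff_le)
    have "B (n - R) \<le> A R" using read_second_imp[OF False] by (simp add: R_def)
    moreover have "B (n - R) \<le> B (Suc (n - R))" using mono_B by (simp add: monoD)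
    ultimately show ?thesis using Suc.IH unfolding R' S' R_def[symmetric]
      by (auto simp: less_Suc_eq intro: order_trans)
  qed
qed

lemma second_le_first_if_count_le:
  assumes step: "\<And>m. B (Suc m) \<le> B m + g" and "Rcnt C n \<le> k"
  shows "B (n - k) \<le> A k + g"
proof (cases "n - k")
  case 0
  have "0 \<le> g" using step[of 0] monoD[OF mono_B, of 0 1] by simp
  moreover have "A 0 \<le> A k" using mono_A by (simp add: monoD)
  ultimately show ?thesis using 0 A_0_eq_B_0 by simp
next
  case (Suc b)
  have "B b \<le> A (Rcnt C n)" using balanced Suc assms(2) by simp
  also have "\<dots> \<le> A k" using mono_A assms(2) by (simp add: monoD)
  finally show ?thesis using step[of b] Suc by simp
qed

lemma first_le_second_if_less_count:
  assumes "k < Rcnt C n"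
  shows "A k \<le> B (n - k)"
proof -
  have "A k \<le> B (n - Rcnt C n)" using balanced assms by blast
  also have "\<dots> \<le> B (n - k)" using mono_B assms by (simp add: monoD)
  finally show ?thesis .
qed

end

theorem lemma3p1:
  fixes r s :: "nat \<Rightarrow> real" and LR LS :: "nat \<Rightarrow> nat" and C :: "nat \<Rightarrow> bool"
    and n :: nat and x :: real
  assumes "prob_vec r" and "prob_vec s"
    and "(\<Sum>i. r (Suc i) * s (Suc i)) > 0"
    and "\<forall>j\<ge>1. LR j \<ge> 1" and "\<forall>j\<ge>1. LS j \<ge> 1"
    and "greedy r s LR LS C"
    and "n \<ge> 1" and "0 \<le> x" and "x \<le> real n"
  shows "(GammaR s LR (nat \<lceil>x\<rceil>) < GammaS r LS (n - nat \<lceil>x\<rceil>) - gam r s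
            \<longrightarrow> real (Rcnt C n) > x)
       \<and> (real (Rcnt C n) > x
            \<longrightarrow> GammaR s LR (nat \<lfloor>x\<rfloor>) \<le> GammaS r LS (n - nat \<lfloor>x\<rfloor>) + gam r s)"
proof -
  interpret greedy_reading "GammaR s LR" "GammaS r LS" C
  proof
    show "mono (GammaR s LR)"
      unfolding GammaR_def[abs_def] using assms(4) prob_vec_nonneg[OF assms(2)]
      by (intro mono_partial_sum) simp
    show "mono (GammaS r LS)"
      unfolding GammaS_def[abs_def] using assms(5) prob_vec_nonneg[OF assms(1)]
      by (intro mono_partial_sum) simp
  qed (use assms(6) in \<open>simp_all add: GammaR_def GammaS_def greedy_def\<close>)
  have step: "GammaS r LS (Suc m) \<le> GammaS r LS m + gam r s" for m
    using le_gam(1)[OF assms(1,2)] assms(5) by (simp add: GammaS_def)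
  have "0 \<le> gam r s"
    using le_gam(1)[OF assms(1,2), of 1] prob_vec_nonneg[OF assms(1), of 1] by simp
  moreover have "GammaS r LS (n - nat \<lceil>x\<rceil>) \<le> GammaR s LR (nat \<lceil>x\<rceil>) + gam r s"
    if "\<not> real (Rcnt C n) > x"
    using second_le_first_if_count_le[OF step, of n "nat \<lceil>x\<rceil>"] that by linarith
  moreover have "GammaR s LR (nat \<lfloor>x\<rfloor>) \<le> GammaS r LS (n - nat \<lfloor>x\<rfloor>)"
    if "real (Rcnt C n) > x"
    using first_le_second_if_less_count[of "nat \<lfloor>x\<rfloor>" n] that assms(8) by linarith
  ultimately show ?thesis by force
qed

end
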